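(* Let $m\ge1$ be an integer, $\Gamma_1,\Gamma_2$ co-prime integers with $1<\Gamma_1<\Gamma_2$, $m_1=m\Gamma_1$, $m_2=m\Gamma_2$, let $1\le j\le K+1$, and let $\tau$ be a real number with $\tau<m\sigma_j/4$. For every integer $N$ with $0\le N<\min\big(m_2(1+\ddot n_{2,j}),\,m_1(1+\ddot n_{1,j})\big)$ and every pair of erroneous remainders $\tilde r_1,\tilde r_2$ of $N$ with $|\Delta r_i|\le\tau$ for $i=1,2$, Algorithm 2 (with index $j$) returns $\hat n_1=n_1$ and $\hat n_2=n_2$.
   Context: $|a|_b$ is the remainder of the integer $a$ modulo the positive integer $b$; $[x]=\lfloor x+1/2\rfloor$. For an integer $N\ge0$: folding integers $n_i=\lfloor N/m_i\rfloor$, remainders $r_i=N-n_im_i$; erroneous remainders are integers $\tilde r_i$ with $0\le\tilde r_i<m_i$, errors $\Delta r_i=\tilde r_i-r_i$. Euclidean sequence: $\sigma_{-1}=\Gamma_2$, $\sigma_0=\Gamma_1$, $\sigma_i=|\sigma_{i-2}|_{\sigma_{i-1}}$ for $i\ge1$; $K\ge0$ is the index with $\sigma_K>1$, $\sigma_{K+1}=1$. For $1\le n<\Gamma_1$, $S_{2,n}=\{|t\Gamma_2|_{\Gamma_1}:0\le t\le n\}$, $d_{2,n}$ = minimum distance between distinct elements of $S_{2,n}$; for $1\le n<\Gamma_2$, $S_{1,n}=\{|t\Gamma_1|_{\Gamma_2}:0\le t\le n\}$, $d_{1,n}$ likewise. $\ddot n_{2,j}=\max\{n:1\le n<\Gamma_1,\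 d_{2,n}\ge\sigma_j\}$, $\ddot n_{1,j}=\max\{n:1\le n<\Gamma_2,\ d_{1,n}\ge\sigma_j\}$. $\bar\Gamma_{21}$ is the inverse of $\Gamma_2$ modulo $\Gamma_1$, $\bar\Gamma_{12}$ the inverse of $\Gamma_1$ modulo $\Gamma_2$. Algorithm 2 (index $j$, input $\tilde r_1,\tilde r_2$): compute $\mathbf q_{21}=(\tilde r_1-\tilde r_2)/m$. (i) If $\mathbf q_{21}\ge\sigma_j/2$: if some $x\in S_{2,\ddot n_{2,j}}$ satisfies $-\sigma_j/2\le\mathbf q_{21}-x<\sigma_j/2$, let $s_2=x$; otherwise let $s_2$ be an element of $S_{2,\ddot n_{2,j}}$ at minimum distance from $\mathbf q_{21}$. Let $\hat n_2\in[0,\Gamma_1)$ with $\hat n_2\equiv s_2\bar\Gamma_{21}\pmod{\Gamma_1}$ and $\hat n_1=[(\hat n_2m_2+\tilde r_2-\tilde r_1)/m_1]$. (ii) If $\mathbf q_{21}<-\sigma_j/2$: if some $y\in S_{1,\ddot n_{1,j}}$ satisfies $-\sigma_j/2\le\mathbf q_{21}+y<\sigma_j/2$, let $s_1=y$; otherwise let $s_1$ be an element of $S_{1,\ddot n_{1,j}}$ at minimum distance from $-\mathbf q_{21}$. Let $\hat n_1\in[0,\Gamma_2)$ with $\hat n_1\equiv s_1\bar\Gamma_{12}\pmod{\Gamma_2}$ and $\hat n_2=[(\hat n_1m_1+\tilde r_1-\tilde r_2)/m_2]$. (iii) If $-\sigma_j/2\le\mathbf q_{21}<\sigma_j/2$: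 $\hat n_1=\hat n_2=0$. *)

theory Defs
  imports "HOL-Number_Theory.Number_Theory"
begin

(* Euclidean sequence, shifted by one: esq G1 G2 i = sigma_{i-1};
   esq 0 = sigma_{-1} = Gamma_2, esq 1 = sigma_0 = Gamma_1. *)
fun esq :: "int \<Rightarrow> int \<Rightarrow> nat \<Rightarrow> int" where
  "esq G1 G2 0 = G2"
| "esq G1 G2 (Suc 0) = G1"
| "esq G1 G2 (Suc (Suc i)) = esq G1 G2 i mod esq G1 G2 (Suc i)"

definition sigma :: "int \<Rightarrow> int \<Rightarrow> nat \<Rightarrow> int" where
  "sigma G1 G2 j = esq G1 G2 (Suc j)"

definition Kidx :: "int \<Rightarrow> int \<Rightarrow> nat" where
  "Kidx G1 G2 = (THE K. sigma G1 G2 K > 1 \<and> sigma G1 G2 (Suc K) = 1)"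

(* Sset a b n = { |t a|_b : 0 <= t <= n };
   S_{2,n} = Sset Gamma_2 Gamma_1 n,  S_{1,n} = Sset Gamma_1 Gamma_2 n *)
definition Sset :: "int \<Rightarrow> int \<Rightarrow> int \<Rightarrow> int set" where
  "Sset a b n = {(t * a) mod b | t. 0 \<le> t \<and> t \<le> n}"

definition mindist :: "int set \<Rightarrow> int" where
  "mindist A = Min {\<bar>x - y\<bar> | x y. x \<in> A \<and> y \<in> A \<and> x \<noteq> y}"

(* nddot a b s = max { n : 1 <= n < b, mindist (Sset a b n) >= s };
   ddot n_{2,j} = nddot Gamma_2 Gamma_1 sigma_j,  ddot n_{1,j} = nddot Gamma_1 Gamma_2 sigma_j *)
definition nddot :: "int \<Rightarrow> int \<Rightarrow> int \<Rightarrow> int" where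
  "nddot a b s = Max {n. 1 \<le> n \<and> n < b \<and> mindist (Sset a b n) \<ge> s}"

definition modinv :: "int \<Rightarrow> int \<Rightarrow> int" where
  "modinv a b = (THE x. 0 \<le> x \<and> x < b \<and> [a * x = 1] (mod b))"

definition rnd :: "real \<Rightarrow> int" where
  "rnd x = \<lfloor>x + 1/2\<rfloor>"

(* Algorithm 2 as a relation: alg2 m G1 G2 j rt1 rt2 n1h n2h holds iff
   (n1h, n2h) is a possible output of Algorithm 2 with index j on input rt1, rt2
   (the "element at minimum distance" choice is nondeterministic). *)
definition alg2 :: "int \<Rightarrow> int \<Rightarrow> int \<Rightarrow> nat \<Rightarrow> int \<Rightarrow> int \<Rightarrow> int \<Rightarrow> int \<Rightarrow> bool" where
  "alg2 m G1 G2 j rt1 rt2 n1h n2h \<longleftrightarrow>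
    (let m1 = m * G1; m2 = m * G2;
         sj = real_of_int (sigma G1 G2 j);
         q = real_of_int (rt1 - rt2) / real_of_int m;
         S2 = Sset G2 G1 (nddot G2 G1 (sigma G1 G2 j));
         S1 = Sset G1 G2 (nddot G1 G2 (sigma G1 G2 j))
     in
     (q \<ge> sj / 2 \<and>
       (\<exists>s2\<in>S2.
          (if (\<exists>x\<in>S2. - sj / 2 \<le> q - of_int x \<and> q - of_int x < sj / 2)
           then - sj / 2 \<le> q - of_int s2 \<and> q - of_int s2 < sj / 2
           else (\<forall>y\<in>S2. \<bar>q - of_int s2\<bar> \<le> \<bar>q - of_int y\<bar>)) \<and>
          n2h = (s2 * modinv G2 G1) mod G1 \<and>
          n1h = rnd (real_of_int (n2h * m2 + rt2 - rt1) / real_of_int m1)))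
   \<or> (q < - sj / 2 \<and>
       (\<exists>s1\<in>S1.
          (if (\<exists>y\<in>S1. - sj / 2 \<le> q + of_int y \<and> q + of_int y < sj / 2)
           then - sj / 2 \<le> q + of_int s1 \<and> q + of_int s1 < sj / 2
           else (\<forall>y\<in>S1. \<bar>- q - of_int s1\<bar> \<le> \<bar>- q - of_int y\<bar>)) \<and>
          n1h = (s1 * modinv G1 G2) mod G2 \<and>
          n2h = rnd (real_of_int (n1h * m1 + rt1 - rt2) / real_of_int m2)))
   \<or> (- sj / 2 \<le> q \<and> q < sj / 2 \<and> n1h = 0 \<and> n2h = 0))"

end

theory Submission imports Defs begin

text \<open>
  Write \<open>N = n\<^sub>1 m\<^sub>1 + r\<^sub>1 = n\<^sub>2 m\<^sub>2 + r\<^sub>2\<close>. Then \<open>(r\<^sub>1 - r\<^sub>2)/m\<close> is the integer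
  \<open>q\<^sub>2\<^sub>1 = n\<^sub>2\<Gamma>\<^sub>2 - n\<^sub>1\<Gamma>\<^sub>1\<close>, and the value \<open>(r\<^sub>1' - r\<^sub>2')/m\<close> computed from the erroneous
  remainders \<open>r\<^sub>i'\<close> lies within \<open>2\<tau>/m < \<sigma>\<^sub>j/2\<close> of it. If \<open>q\<^sub>2\<^sub>1 \<ge> 0\<close> it equals \<open>|n\<^sub>2\<Gamma>\<^sub>2|\<^sub>\<Gamma>\<^sub>1\<close>, an element of \<open>S\<^sub>2\<close>, whose points are
  \<open>\<sigma>\<^sub>j\<close>-separated; so the only point of \<open>S\<^sub>2\<close> in the window is \<open>q\<^sub>2\<^sub>1\<close> itself, and
  multiplying by the inverse of \<open>\<Gamma>\<^sub>2\<close> modulo \<open>\<Gamma>\<^sub>1\<close> recovers \<open>n\<^sub>2 < \<Gamma>\<^sub>1\<close>. Then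
  \<open>n\<^sub>2m\<^sub>2 + r\<^sub>2' - r\<^sub>1' = n\<^sub>1m\<^sub>1 + (\<Delta>r\<^sub>2 - \<Delta>r\<^sub>1)\<close> with an error below \<open>m\<^sub>1/2\<close>, so rounding
  gives \<open>n\<^sub>1\<close>. The case \<open>q\<^sub>2\<^sub>1 < 0\<close> is symmetric, and \<open>q\<^sub>2\<^sub>1 = 0\<close> forces
  \<open>\<Gamma>\<^sub>1 | n\<^sub>2 < \<Gamma>\<^sub>1\<close>, i.e. \<open>n\<^sub>1 = n\<^sub>2 = 0\<close>.
\<close>

lemma modinv_cong:
  fixes a b :: int
  assumes "coprime a b" "1 < b"
  shows "[a * modinv a b = 1] (mod b)"
proof -
  let ?P = "\<lambda>y. 0 \<le> y \<and> y < b \<and> [a * y = 1] (mod b)"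
  obtain x where x: "[a * x = 1] (mod b)"
    using cong_solve_coprime_int[OF assms(1)] by blast
  have "?P (x mod b)"
    using x assms(2) by (auto simp: cong_def mod_mult_right_eq)
  moreover have "y = z" if "?P y" "?P z" for y z
  proof -
    have "[a * y = a * z] (mod b)" using that by (meson cong_sym cong_trans)
    then have "[y = z] (mod b)" using cong_mult_lcancel assms(1) by blast
    then show ?thesis using that cong_less_imp_eq_int by blast
  qed
  ultimately have "\<exists>!y. ?P y" by blast
  then have "?P (modinv a b)"
    unfolding modinv_def by (rule theI')
  then show ?thesis by blast
qed

lemma modinv_recovers:
  fixes a b x n :: int
  assumes "coprime a b" "1 < b" "[x = n * a] (mod b)" "0 \<le> n" "n < b"
  shows "(x * modinv a b) mod b = n"
proof -
  have "[x * modinv a b = n * (a * modinv a b)] (mod b)"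
    using assms(3) by (metis cong_scalar_right mult.assoc)
  also have "[n * (a * modinv a b) = n * 1] (mod b)"
    using modinv_cong[OF assms(1,2)] by (rule cong_scalar_left)
  finally show ?thesis
    using assms(4,5) by (simp add: cong_def)
qed

lemma Sset_eq_image: "Sset a b n = (\<lambda>t. (t * a) mod b) ` {0..n}"
  unfolding Sset_def by auto

lemma finite_Sset: "finite (Sset a b n)"
  unfolding Sset_eq_image by simp

lemma mult_mod_in_Sset: "0 \<le> t \<Longrightarrow> t \<le> n \<Longrightarrow> (t * a) mod b \<in> Sset a b n"
  unfolding Sset_def by auto

lemma zero_in_Sset: "0 \<le> n \<Longrightarrow> 0 \<in> Sset a b n"
  using mult_mod_in_Sset[of 0 n a b] by simp

lemma Sset_1: "Sset a b 1 = {0, a mod b}"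
proof -
  have "{0..(1::int)} = {0, 1}" by auto
  then show ?thesis unfolding Sset_eq_image by simp
qed

lemma mindist_le:
  assumes "finite A" "x \<in> A" "y \<in> A" "x \<noteq> y"
  shows "mindist A \<le> \<bar>x - y\<bar>"
proof -
  have "{\<bar>x - y\<bar> | x y. x \<in> A \<and> y \<in> A \<and> x \<noteq> y} \<subseteq> (\<lambda>(x, y). \<bar>x - y\<bar>) ` (A \<times> A)"
    by auto
  then have "finite {\<bar>x - y\<bar> | x y. x \<in> A \<and> y \<in> A \<and> x \<noteq> y}"
    using assms(1) finite_subset by blast
  then show ?thesis
    unfolding mindist_def using assms by (intro Min_le) auto
qed

lemma mindist_pair: "0 < c \<Longrightarrow> mindist {0, c} = (c :: int)"
proof -
  assume "0 < c"
  then have "c \<in> {\<bar>x - y\<bar> | x y. x \<in> {0, c} \<and> y \<in> {0, c} \<and> x \<noteq> y}"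
  proof (intro CollectI exI conjI)
    show "c = \<bar>c - 0\<bar>" using \<open>0 < c\<close> by simp
  qed (use \<open>0 < c\<close> in simp_all)
  then have "{\<bar>x - y\<bar> | x y. x \<in> {0, c} \<and> y \<in> {0, c} \<and> x \<noteq> y} = {c}"
    using \<open>0 < c\<close> by auto
  then show ?thesis unfolding mindist_def by simp
qed

lemma mindist_unique_near:
  fixes q :: real
  assumes "finite A" "s \<le> mindist A" "x \<in> A" "y \<in> A"
    and "\<bar>q - of_int x\<bar> < of_int s / 2" "\<bar>q - of_int y\<bar> \<le> of_int s / 2"
  shows "y = x"
proof (rule ccontr)
  assume "y \<noteq> x"
  then have "s \<le> \<bar>y - x\<bar>" using mindist_le[OF assms(1,4,3)] assms(2) by linarith
  then have "of_int s \<le> \<bar>of_int y - (of_int x :: real)\<bar>" by linarith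
  with assms(5,6) show False by linarith
qed

lemma nddot_spec:
  fixes a b s :: int
  assumes "1 < b" "0 < a mod b" "s \<le> a mod b"
  shows "1 \<le> nddot a b s \<and> nddot a b s < b \<and> s \<le> mindist (Sset a b (nddot a b s))"
proof -
  let ?T = "{n. 1 \<le> n \<and> n < b \<and> mindist (Sset a b n) \<ge> s}"
  have "finite ?T" by (rule finite_subset[of _ "{1..<b}"]) auto
  moreover have "1 \<in> ?T" using assms by (simp add: Sset_1 mindist_pair)
  ultimately have "Max ?T \<in> ?T" by (intro Max_in) auto
  then show ?thesis unfolding nddot_def by simp
qed

lemma mod_le_bound:
  fixes a b c :: int
  assumes "0 \<le> a" "a \<le> c" "0 \<le> b" "b \<le> c"
  shows "0 \<le> a mod b \<and> a mod b \<le> c"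
proof (cases "b = 0")
  case False
  then have "0 \<le> a mod b" "a mod b < b" using assms(3) by simp_all
  then show ?thesis using assms(4) by linarith
qed (use assms in simp)

lemma sigma_le_first_remainder:
  fixes G1 G2 :: int
  assumes "coprime G1 G2" "1 < G1" "1 \<le> j"
  shows "sigma G1 G2 j \<le> G2 mod G1"
proof -
  let ?c = "G2 mod G1"
  \<comment> \<open>Without coprimality \<open>?c\<close> could be \<open>0\<close>, and then \<open>\<sigma>\<^sub>2 = \<Gamma>\<^sub>1 mod 0 = \<Gamma>\<^sub>1\<close>.\<close>
  have "?c \<noteq> 0"
  proof
    assume "?c = 0"
    then have "is_unit G1"
      using assms(1) by (metis coprime_common_divisor dvd_eq_mod_eq_0 dvd_refl)
    then show False using assms(2) by simp
  qed
  moreover have "0 \<le> ?c" using assms(2) by simp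
  ultimately have c_pos: "0 < ?c" by simp
  have "0 \<le> esq G1 G2 (Suc (Suc i)) \<and> esq G1 G2 (Suc (Suc i)) \<le> ?c \<and>
        0 \<le> esq G1 G2 (Suc (Suc (Suc i))) \<and> esq G1 G2 (Suc (Suc (Suc i))) \<le> ?c" for i
  proof (induction i)
    case 0
    show ?case using c_pos by (simp add: order_less_imp_le)
  next
    case (Suc i)
    have "esq G1 G2 (Suc (Suc (Suc (Suc i)))) = esq G1 G2 (Suc (Suc i)) mod esq G1 G2 (Suc (Suc (Suc i)))"
      by (rule esq.simps(3))
    then show ?case using Suc.IH mod_le_bound[of "esq G1 G2 (Suc (Suc i))" ?c "esq G1 G2 (Suc (Suc (Suc i)))"]
      by (simp only:)
  qed
  moreover have "Suc j = Suc (Suc (j - 1))" using assms(3) by simp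
  ultimately show ?thesis unfolding sigma_def by metis
qed

lemma rnd_recovers_quotient:
  fixes M n e :: int
  assumes "0 < M" "2 * \<bar>e\<bar> < M"
  shows "rnd (of_int (n * M + e) / of_int M) = n"
proof -
  have quotient: "of_int (n * M + e) / of_int M = of_int n + of_int e / (of_int M :: real)"
    using assms(1) by (simp add: field_simps)
  have "\<bar>of_int e / (of_int M :: real)\<bar> < 1 / 2"
    using assms by (simp add: abs_divide divide_less_eq)
  then have "- 1 / 2 < of_int e / (of_int M :: real)" "of_int e / (of_int M :: real) < 1 / 2"
    by linarith+
  then show ?thesis
    unfolding rnd_def quotient by (intro floor_unique) linarith+
qed

lemma div_bounds_of_less_mult:
  fixes N M d :: int
  assumes "0 \<le> N" "0 < M" "N < M * (1 + d)"
  shows "0 \<le> N div M \<and> N div M \<le> d"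
proof -
  have "N div M * M \<le> N" using assms(2) by (metis div_mult_mod_eq le_add_same_cancel1 pos_mod_sign)
  also have "N < (1 + d) * M" using assms(3) by (simp add: algebra_simps)
  finally show ?thesis using assms(1,2) by (simp add: mult_less_cancel_right pos_imp_zdiv_nonneg_iff)
qed

locale erroneous_remainders =
  fixes m G1 G2 :: int and j :: nat and \<tau> :: real and N rt1 rt2 :: int
  assumes m_pos: "1 \<le> m"
    and coprime: "coprime G1 G2" and G1_gt_1: "1 < G1" and G1_lt_G2: "G1 < G2"
    and j_pos: "1 \<le> j"
    and \<tau>_bound: "\<tau> < real_of_int m * real_of_int (sigma G1 G2 j) / 4"
    and N_nonneg: "0 \<le> N"
    and N_bound: "N < min (m * G2 * (1 + nddot G2 G1 (sigma G1 G2 j)))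
                          (m * G1 * (1 + nddot G1 G2 (sigma G1 G2 j)))"
    and error1: "\<bar>real_of_int (rt1 - N mod (m * G1))\<bar> \<le> \<tau>"
    and error2: "\<bar>real_of_int (rt2 - N mod (m * G2))\<bar> \<le> \<tau>"
begin

abbreviation "sj \<equiv> sigma G1 G2 j"
abbreviation "n1 \<equiv> N div (m * G1)"
abbreviation "n2 \<equiv> N div (m * G2)"
abbreviation "S1 \<equiv> Sset G1 G2 (nddot G1 G2 sj)"
abbreviation "S2 \<equiv> Sset G2 G1 (nddot G2 G1 sj)"

text \<open>\<open>q21\<close> is the exact value \<open>(r\<^sub>1 - r\<^sub>2)/m\<close>; \<open>q21_tilde\<close> is the algorithm's \<open>\<bold>q\<^sub>2\<^sub>1\<close>.\<close>

abbreviation "q21 \<equiv> n2 * G2 - n1 * G1"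
abbreviation "q21_tilde \<equiv> real_of_int (rt1 - rt2) / real_of_int m"

lemma sj_pos: "0 < sj"
proof -
  have "0 \<le> \<tau>" using error1 by linarith
  then have "0 < real_of_int m * real_of_int sj" using \<tau>_bound by linarith
  then show ?thesis using m_pos by (simp add: zero_less_mult_iff)
qed

lemma sj_le_G2_mod_G1: "sj \<le> G2 mod G1"
  using sigma_le_first_remainder[OF coprime G1_gt_1 j_pos] .

lemma sj_lt_G1: "sj < G1"
  using sj_le_G2_mod_G1 G1_gt_1 pos_mod_bound[of G1 G2] by linarith

lemma nddot2_spec: "1 \<le> nddot G2 G1 sj \<and> nddot G2 G1 sj < G1 \<and> sj \<le> mindist S2"
  using nddot_spec[OF G1_gt_1 _ sj_le_G2_mod_G1] sj_pos sj_le_G2_mod_G1 by linarith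

lemma nddot1_spec: "1 \<le> nddot G1 G2 sj \<and> nddot G1 G2 sj < G2 \<and> sj \<le> mindist S1"
proof -
  have "G1 mod G2 = G1" using G1_gt_1 G1_lt_G2 by simp
  then show ?thesis
    using nddot_spec[of G2 G1 sj] G1_gt_1 G1_lt_G2 sj_pos sj_lt_G1 by simp
qed

lemma n2_bounds: "0 \<le> n2 \<and> n2 \<le> nddot G2 G1 sj"
proof (rule div_bounds_of_less_mult[OF N_nonneg])
  show "0 < m * G2" using m_pos G1_gt_1 G1_lt_G2 by simp
  show "N < m * G2 * (1 + nddot G2 G1 sj)" using N_bound by simp
qed

lemma n1_bounds: "0 \<le> n1 \<and> n1 \<le> nddot G1 G2 sj"
proof (rule div_bounds_of_less_mult[OF N_nonneg])
  show "0 < m * G1" using m_pos G1_gt_1 by simp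
  show "N < m * G1 * (1 + nddot G1 G2 sj)" using N_bound by simp
qed

lemma remainder_diff: "N mod (m * G1) - N mod (m * G2) = m * q21"
  using div_mult_mod_eq[of N "m * G1"] div_mult_mod_eq[of N "m * G2"] by (simp add: algebra_simps)

lemma q21_bounds: "- G2 < q21 \<and> q21 < G1"
proof -
  have "0 < m * G1" "0 < m * G2" using m_pos G1_gt_1 G1_lt_G2 by simp_all
  then have "0 \<le> N mod (m * G1)" "N mod (m * G1) < m * G1"
    and "0 \<le> N mod (m * G2)" "N mod (m * G2) < m * G2" by simp_all
  then have "m * (- G2) < m * q21" "m * q21 < m * G1"
    using remainder_diff by linarith+
  then show ?thesis
    using mult_less_cancel_left_pos[of m "- G2" q21] mult_less_cancel_left_pos[of m q21 G1] m_pos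
    by simp
qed

lemma q21_in_S2: "0 \<le> q21 \<Longrightarrow> q21 \<in> S2"
proof -
  assume "0 \<le> q21"
  have "(n2 * G2) mod G1 = (q21 + n1 * G1) mod G1" by simp
  also have "\<dots> = q21 mod G1" by (rule mod_mult_self1)
  also have "\<dots> = q21" using \<open>0 \<le> q21\<close> q21_bounds by (intro mod_pos_pos_trivial) simp_all
  finally show ?thesis using mult_mod_in_Sset[of n2 "nddot G2 G1 sj" G2 G1] n2_bounds by simp
qed

lemma neg_q21_in_S1: "q21 < 0 \<Longrightarrow> - q21 \<in> S1"
proof -
  assume "q21 < 0"
  have "(n1 * G1) mod G2 = (- q21 + n2 * G2) mod G2" by simp
  also have "\<dots> = (- q21) mod G2" by (rule mod_mult_self1)
  also have "\<dots> = - q21" using \<open>q21 < 0\<close> q21_bounds by (intro mod_pos_pos_trivial) simp_all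
  finally show ?thesis using mult_mod_in_Sset[of n1 "nddot G1 G2 sj" G1 G2] n1_bounds by simp
qed

abbreviation "\<Delta>r1 \<equiv> rt1 - N mod (m * G1)"
abbreviation "\<Delta>r2 \<equiv> rt2 - N mod (m * G2)"

lemma error_diff_bound: "2 * \<bar>\<Delta>r1 - \<Delta>r2\<bar> < m * sj"
proof -
  have "\<bar>real_of_int \<Delta>r1 - real_of_int \<Delta>r2\<bar> < real_of_int m * real_of_int sj / 2"
    using error1 error2 \<tau>_bound unfolding abs_le_iff abs_less_iff by linarith
  then have "real_of_int (2 * \<bar>\<Delta>r1 - \<Delta>r2\<bar>) < real_of_int (m * sj)"
    by (simp add: field_simps)
  then show ?thesis by (simp only: of_int_less_iff)
qed

lemma q21_tilde_close: "\<bar>q21_tilde - real_of_int q21\<bar> < real_of_int sj / 2"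
proof -
  obtain e where e: "e = \<Delta>r1 - \<Delta>r2" by simp
  have "rt1 - rt2 = q21 * m + e" using remainder_diff e by (simp add: algebra_simps)
  then have "real_of_int (rt1 - rt2) = real_of_int q21 * real_of_int m + real_of_int e"
    by (metis of_int_add of_int_mult)
  then have "q21_tilde - real_of_int q21 = real_of_int e / real_of_int m"
    using m_pos by (simp add: field_simps)
  moreover have "real_of_int (2 * \<bar>e\<bar>) < real_of_int (m * sj)"
    using error_diff_bound e by (simp only: of_int_less_iff)
  ultimately show ?thesis using m_pos by (simp add: abs_divide divide_less_eq field_simps)
qed

lemma q21_tilde_bounds:
  "- real_of_int sj / 2 < q21_tilde - real_of_int q21 \<and> q21_tilde - real_of_int q21 < real_of_int sj / 2"
  using q21_tilde_close unfolding abs_less_iff by linarith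

lemma neg_q21_tilde_close: "\<bar>- q21_tilde - of_int (- q21)\<bar> < real_of_int sj / 2"
proof -
  have "- q21_tilde - of_int (- q21) = - (q21_tilde - of_int q21)" by simp
  then show ?thesis using q21_tilde_close by (simp only: abs_minus_cancel)
qed

lemma error_diff_lt_m1: "2 * \<bar>\<Delta>r1 - \<Delta>r2\<bar> < m * G1"
proof -
  have "m * sj < m * G1" using sj_lt_G1 m_pos by simp
  then show ?thesis using error_diff_bound by linarith
qed

text \<open>Since \<open>q21\<close> (resp. \<open>-q21\<close>) itself lies in the window, Algorithm 2 never falls back
  to the element of minimum distance; that alternative is left as an arbitrary \<open>P\<close>.\<close>

lemma first_branch_selects_n2:
  assumes "real_of_int sj / 2 \<le> q21_tilde" and "s2 \<in> S2"
    and "if \<exists>x\<in>S2. - real_of_int sj / 2 \<le> q21_tilde - of_int x \<and> q21_tilde - of_int x < real_of_int sj / 2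
         then - real_of_int sj / 2 \<le> q21_tilde - of_int s2 \<and> q21_tilde - of_int s2 < real_of_int sj / 2
         else P"
  shows "(s2 * modinv G2 G1) mod G1 = n2"
proof -
  have "0 \<le> q21" using assms(1) q21_tilde_bounds sj_pos by linarith
  then have window: "\<exists>x\<in>S2. - real_of_int sj / 2 \<le> q21_tilde - of_int x \<and> q21_tilde - of_int x < real_of_int sj / 2"
    using q21_in_S2 q21_tilde_bounds by force
  then have "- real_of_int sj / 2 \<le> q21_tilde - of_int s2 \<and> q21_tilde - of_int s2 < real_of_int sj / 2"
    using assms(3) by (simp only: window if_True)
  then have "\<bar>q21_tilde - of_int s2\<bar> \<le> real_of_int sj / 2"
    unfolding abs_le_iff by linarith
  then have "s2 = q21"
    using mindist_unique_near[OF finite_Sset _ q21_in_S2 assms(2) q21_tilde_close] nddot2_spec \<open>0 \<le> q21\<close>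
    by blast
  moreover have "[q21 = n2 * G2] (mod G1)" by (simp add: cong_iff_dvd_diff)
  ultimately show ?thesis
    using modinv_recovers[of G2 G1 q21 n2] coprime G1_gt_1 n2_bounds nddot2_spec
    by (simp add: coprime_commute)
qed

lemma second_branch_selects_n1:
  assumes "q21_tilde < - real_of_int sj / 2" and "s1 \<in> S1"
    and "if \<exists>y\<in>S1. - real_of_int sj / 2 \<le> q21_tilde + of_int y \<and> q21_tilde + of_int y < real_of_int sj / 2
         then - real_of_int sj / 2 \<le> q21_tilde + of_int s1 \<and> q21_tilde + of_int s1 < real_of_int sj / 2
         else P"
  shows "(s1 * modinv G1 G2) mod G2 = n1"
proof -
  have "q21 < 0" using assms(1) q21_tilde_bounds sj_pos by linarith
  then have window: "\<exists>y\<in>S1. - real_of_int sj / 2 \<le> q21_tilde + of_int y \<and> q21_tilde + of_int y < real_of_int sj / 2"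
    using neg_q21_in_S1 q21_tilde_bounds by force
  then have "- real_of_int sj / 2 \<le> q21_tilde + of_int s1 \<and> q21_tilde + of_int s1 < real_of_int sj / 2"
    using assms(3) by (simp only: window if_True)
  then have "\<bar>- q21_tilde - of_int s1\<bar> \<le> real_of_int sj / 2"
    unfolding abs_le_iff by linarith
  then have "s1 = - q21"
    using mindist_unique_near[OF finite_Sset _ neg_q21_in_S1 assms(2) neg_q21_tilde_close]
      nddot1_spec \<open>q21 < 0\<close>
    by blast
  moreover have "[- q21 = n1 * G1] (mod G2)" by (simp add: cong_iff_dvd_diff)
  ultimately show ?thesis
    using modinv_recovers[of G1 G2 "- q21" n1] coprime G1_gt_1 G1_lt_G2 n1_bounds nddot1_spec
    by simp
qed

lemma first_branch_rounds_to_n1: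
  "rnd (real_of_int (n2 * (m * G2) + rt2 - rt1) / real_of_int (m * G1)) = n1"
proof -
  have fold: "n2 * (m * G2) + rt2 - rt1 = n1 * (m * G1) + (\<Delta>r2 - \<Delta>r1)"
    using div_mult_mod_eq[of N "m * G1"] div_mult_mod_eq[of N "m * G2"] by (simp add: algebra_simps)
  have "2 * \<bar>\<Delta>r2 - \<Delta>r1\<bar> < m * G1"
    using error_diff_lt_m1 by (simp add: abs_minus_commute)
  then show ?thesis
    unfolding fold using m_pos G1_gt_1 by (intro rnd_recovers_quotient) simp_all
qed

lemma second_branch_rounds_to_n2:
  "rnd (real_of_int (n1 * (m * G1) + rt1 - rt2) / real_of_int (m * G2)) = n2"
proof -
  have fold: "n1 * (m * G1) + rt1 - rt2 = n2 * (m * G2) + (\<Delta>r1 - \<Delta>r2)"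
    using div_mult_mod_eq[of N "m * G1"] div_mult_mod_eq[of N "m * G2"] by (simp add: algebra_simps)
  have "m * G1 < m * G2" using G1_lt_G2 m_pos by simp
  then have "2 * \<bar>\<Delta>r1 - \<Delta>r2\<bar> < m * G2" using error_diff_lt_m1 by linarith
  then show ?thesis
    unfolding fold using m_pos G1_gt_1 G1_lt_G2 by (intro rnd_recovers_quotient) simp_all
qed

lemma third_branch_forces_zero:
  assumes "- real_of_int sj / 2 \<le> q21_tilde" "q21_tilde < real_of_int sj / 2"
  shows "n1 = 0 \<and> n2 = 0"
proof -
  have "\<bar>q21_tilde - of_int 0\<bar> \<le> real_of_int sj / 2" "\<bar>- q21_tilde - of_int 0\<bar> \<le> real_of_int sj / 2"
    unfolding of_int_0 diff_zero abs_le_iff using assms by linarith+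
  then have "0 \<le> q21 \<Longrightarrow> 0 = q21" "q21 < 0 \<Longrightarrow> 0 = - q21"
    using mindist_unique_near[OF finite_Sset _ q21_in_S2 zero_in_Sset q21_tilde_close]
      mindist_unique_near[OF finite_Sset _ neg_q21_in_S1 zero_in_Sset neg_q21_tilde_close]
      nddot1_spec nddot2_spec
    by auto
  then have "q21 = 0" by linarith
  then have "G1 dvd n2 * G2" by (metis dvd_triv_right eq_iff_diff_eq_0)
  then have "G1 dvd n2" using coprime by (simp add: coprime_dvd_mult_left_iff)
  then have "n2 = 0" using n2_bounds nddot2_spec by (metis zdvd_not_zless order_le_less_trans linorder_not_less order.antisym)
  then show ?thesis using \<open>q21 = 0\<close> G1_gt_1 by simp
qed

end

theorem corollary1:
  fixes m G1 G2 N rt1 rt2 n1h n2h :: int and j :: nat and \<tau> :: real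
  assumes "m \<ge> 1"
    and "coprime G1 G2" and "1 < G1" and "G1 < G2"
    and "1 \<le> j" and "j \<le> Kidx G1 G2 + 1"
    and "\<tau> < real_of_int m * real_of_int (sigma G1 G2 j) / 4"
    and "0 \<le> N"
    and "N < min (m * G2 * (1 + nddot G2 G1 (sigma G1 G2 j)))
                 (m * G1 * (1 + nddot G1 G2 (sigma G1 G2 j)))"
    and "0 \<le> rt1" and "rt1 < m * G1"
    and "0 \<le> rt2" and "rt2 < m * G2"
    and "\<bar>real_of_int (rt1 - N mod (m * G1))\<bar> \<le> \<tau>"
    and "\<bar>real_of_int (rt2 - N mod (m * G2))\<bar> \<le> \<tau>"
    and "alg2 m G1 G2 j rt1 rt2 n1h n2h"
  shows "n1h = N div (m * G1) \<and> n2h = N div (m * G2)"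
proof -
  interpret erroneous_remainders m G1 G2 j \<tau> N rt1 rt2
    by unfold_locales (fact assms)+
  from \<open>alg2 m G1 G2 j rt1 rt2 n1h n2h\<close> show ?thesis
    unfolding alg2_def Let_def
    apply (elim disjE conjE bexE)
    subgoal premises branch for s2
      using first_branch_selects_n2[OF branch(1-3)] first_branch_rounds_to_n1 branch(4,5) by simp
    subgoal premises branch for s1
      using second_branch_selects_n1[OF branch(1-3)] second_branch_rounds_to_n2 branch(4,5) by simp
    subgoal using third_branch_forces_zero by simp
    done
qed

end
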